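(* Consider an oracle problem, with either a unitary oracle $O$ or a Hamiltonian oracle $H$, that is compatible with a group $G$. For every time $T$, the set of success probabilities $P_{win}$ achievable by protocols with query time $T$ is unchanged if one restricts attention to $G$-invariant protocols.
   Context: An oracle problem consists of finite-dimensional Hilbert spaces $\mathcal{A},\mathcal{M},\mathcal{M}'$, a pure state $|\psi_0\rangle\in\mathcal{A}$, an oracle given either by a unitary $O$ on $\mathcal{A}\otimes\mathcal{M}$ together with a time step $\Delta>0$ (discrete case) or by a Hermitian $H$ on $\mathcal{A}\otimes\mathcal{M}$ (continuous case), and a set $\{\Pi_x\}$ of positive operators on $\mathcal{A}\otimes\mathcal{M}'$. A protocol with query time $T$ and success probability $P_{win}$ consists of positive-operator-valued functions $\rho(t)$ on $\mathcal{A}$ and $\tilde\rho(t)$ on $\mathcal{A}\otimes\mathcal{M}$, defined for $0\le t\le T$ (for $t$ an integer multiple of $\Delta$ in the discrete case, where $T$ is also a multiple of $\Delta$), together with a positive operator $\tilde\rho'$ on $\mathcal{A}\otimes\mathcal{M}'$. These must satisfy: - $\rho(0)=|\psi_0\rangle\langle\psi_0|$; - $\mathrm{Tr}_{\mathcal{M}}\tilde\rho(t)=\rho(t)$ for all $t$; - in the discrete case, $\rho(t+\Delta)=\mathrm{Tr}_{\mathcal{M}}[O\tilde\rho(t)O^{-1}]$ for $0\le t\le T-\Delta$; - in the continuous case, $\frac{d}{dt}\rho(t)=-i\,\mathrm{Tr}_{\mathcal{M}}[H\tilde\rho(t)-\tilde\rho(t)H]$ for $0\le t\le T$, with $\tilde\rho$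 continuous (or measurable, using the integral form); - $\mathrm{Tr}_{\mathcal{M}'}\tilde\rho'=\rho(T)$; - $P_{win}\le\mathrm{Tr}[\Pi_x\tilde\rho']$ for every $x$. A group $G$ is compatible with the problem if there are unitary representations $R_\mathcal{A},R_\mathcal{M},R_{\mathcal{M}'}$ of $G$ on $\mathcal{A},\mathcal{M},\mathcal{M}'$ satisfying the following conditions for all $g\in G$, where $R(g)=R_\mathcal{A}(g)\otimes R_\mathcal{M}(g)$ and $R'(g)=R_\mathcal{A}(g)\otimes R_{\mathcal{M}'}(g)$: - $R_\mathcal{A}(g)|\psi_0\rangle=|\psi_0\rangle$; - $R(g)OR(g^{-1})=O$ (resp. $R(g)HR(g^{-1})=H$); - $\{R'(g)\Pi_xR'(g^{-1})\}=\{\Pi_x\}$ as sets. A protocol is $G$-invariant if $R(g)\tilde\rho(t)R(g^{-1})=\tilde\rho(t)$ for all $g$ and $t$, and $R'(g)\tilde\rho'R'(g^{-1})=\tilde\rho'$ for all $g$. *)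

theory Defs
  imports "HOL-Analysis.Analysis" "HOL-Algebra.Group"
begin

text \<open>Operators on a finite-dimensional Hilbert space with orthonormal basis indexed
  by a finite type 'i are represented as matrices 'i => 'i => complex.
  The tensor product space A (x) M is indexed by the product type 'a * 'm.\<close>

type_synonym 'i qop = "'i \<Rightarrow> 'i \<Rightarrow> complex"

definition qmul :: "'i::finite qop \<Rightarrow> 'i qop \<Rightarrow> 'i qop" where
  "qmul A B = (\<lambda>i j. \<Sum>k\<in>UNIV. A i k * B k j)"

definition qid :: "'i qop" where
  "qid = (\<lambda>i j. if i = j then 1 else 0)"

definition qadj :: "'i qop \<Rightarrow> 'i qop" where
  "qadj A = (\<lambda>i j. cnj (A j i))"

definition qapply :: "'i::finite qop \<Rightarrow> ('i \<Rightarrow> complex) \<Rightarrow> ('i \<Rightarrow> complex)" where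
  "qapply A v = (\<lambda>i. \<Sum>j\<in>UNIV. A i j * v j)"

definition qunitary :: "'i::finite qop \<Rightarrow> bool" where
  "qunitary U \<longleftrightarrow> qmul U (qadj U) = qid \<and> qmul (qadj U) U = qid"

definition qhermitian :: "'i qop \<Rightarrow> bool" where
  "qhermitian A \<longleftrightarrow> qadj A = A"

definition qpositive :: "'i::finite qop \<Rightarrow> bool" where
  "qpositive A \<longleftrightarrow> qhermitian A \<and>
     (\<forall>v. 0 \<le> Re (\<Sum>i\<in>UNIV. \<Sum>j\<in>UNIV. cnj (v i) * A i j * v j))"

definition qtrace :: "'i::finite qop \<Rightarrow> complex" where
  "qtrace A = (\<Sum>i\<in>UNIV. A i i)"

definition ptrace :: "('a \<times> 'm::finite) qop \<Rightarrow> 'a qop" where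
  "ptrace X = (\<lambda>i j. \<Sum>m\<in>UNIV. X (i, m) (j, m))"

definition kron :: "'a qop \<Rightarrow> 'm qop \<Rightarrow> ('a \<times> 'm) qop" where
  "kron A B = (\<lambda>(i, m) (j, n). A i j * B m n)"

definition qproj :: "('i \<Rightarrow> complex) \<Rightarrow> 'i qop" where
  "qproj \<psi> = (\<lambda>i j. \<psi> i * cnj (\<psi> j))"

definition unit_vec :: "('i::finite \<Rightarrow> complex) \<Rightarrow> bool" where
  "unit_vec \<psi> \<longleftrightarrow> (\<Sum>i\<in>UNIV. (cmod (\<psi> i))\<^sup>2) = 1"

text \<open>A qoracle: either a unitary O with a time step Delta (discrete case) or a
  Hamiltonian H (continuous case), acting on A (x) M.\<close>
datatype 'i qoracle = Discrete "'i \<Rightarrow> 'i \<Rightarrow> complex" real | Continuous "'i \<Rightarrow> 'i \<Rightarrow> complex"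

fun qoracle_op :: "'i qoracle \<Rightarrow> 'i qop" where
  "qoracle_op (Discrete U \<Delta>) = U"
| "qoracle_op (Continuous H) = H"

fun qoracle_wf :: "'i::finite qoracle \<Rightarrow> bool" where
  "qoracle_wf (Discrete U \<Delta>) \<longleftrightarrow> qunitary U \<and> \<Delta> > 0"
| "qoracle_wf (Continuous H) \<longleftrightarrow> qhermitian H"

fun query_times :: "'i qoracle \<Rightarrow> real \<Rightarrow> real set" where
  "query_times (Discrete U \<Delta>) T = {t. \<exists>k::nat. t = real k * \<Delta> \<and> t \<le> T}"
| "query_times (Continuous H) T = {0..T}"

text \<open>A protocol with query time T and success probability P.  In the discrete case the
  inverse O^{-1} of the unitary O is its adjoint.\<close>
definition protocol ::
  "('a::finite \<Rightarrow> complex) \<Rightarrow> ('a \<times> 'm::finite) qoracle \<Rightarrow> ('a \<times> 'n::finite) qop set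
   \<Rightarrow> real \<Rightarrow> real \<Rightarrow> (real \<Rightarrow> 'a qop) \<Rightarrow> (real \<Rightarrow> ('a \<times> 'm) qop) \<Rightarrow> ('a \<times> 'n) qop \<Rightarrow> bool"
  where
  "protocol \<psi>0 orc Pis T P \<rho> \<rho>t \<rho>' \<longleftrightarrow>
     (\<forall>t\<in>query_times orc T. qpositive (\<rho> t) \<and> qpositive (\<rho>t t) \<and> ptrace (\<rho>t t) = \<rho> t) \<and>
     \<rho> 0 = qproj \<psi>0 \<and>
     (case orc of
        Discrete U \<Delta> \<Rightarrow>
          (\<exists>N::nat. T = real N * \<Delta>) \<and>
          (\<forall>k::nat. real (Suc k) * \<Delta> \<le> T \<longrightarrow>
             \<rho> (real (Suc k) * \<Delta>) = ptrace (qmul (qmul U (\<rho>t (real k * \<Delta>))) (qadj U)))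
      | Continuous H \<Rightarrow>
          0 \<le> T \<and>
          (\<forall>i j. continuous_on {0..T} (\<lambda>s. \<rho>t s i j)) \<and>
          (\<forall>t\<in>{0..T}. \<forall>i j.
             ((\<lambda>s. \<rho> s i j) has_vector_derivative
                (- \<i> * ptrace (\<lambda>x y. qmul H (\<rho>t t) x y - qmul (\<rho>t t) H x y) i j))
             (at t within {0..T}))) \<and>
     qpositive \<rho>' \<and> ptrace \<rho>' = \<rho> T \<and>
     (\<forall>Pr\<in>Pis. P \<le> Re (qtrace (qmul Pr \<rho>')))"

definition unitary_rep :: "('g, 'b) monoid_scheme \<Rightarrow> ('g \<Rightarrow> 'i::finite qop) \<Rightarrow> bool" where
  "unitary_rep G R \<longleftrightarrow>
     (\<forall>g\<in>carrier G. qunitary (R g)) \<and>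
     R \<one>\<^bsub>G\<^esub> = qid \<and>
     (\<forall>g\<in>carrier G. \<forall>h\<in>carrier G. R (g \<otimes>\<^bsub>G\<^esub> h) = qmul (R g) (R h))"

definition conj_by :: "'i::finite qop \<Rightarrow> 'i qop \<Rightarrow> 'i qop \<Rightarrow> 'i qop" where
  "conj_by U X V = qmul (qmul U X) V"

definition compatible ::
  "('g, 'b) monoid_scheme \<Rightarrow> ('g \<Rightarrow> 'a::finite qop) \<Rightarrow> ('g \<Rightarrow> 'm::finite qop) \<Rightarrow> ('g \<Rightarrow> 'n::finite qop)
   \<Rightarrow> ('a \<Rightarrow> complex) \<Rightarrow> ('a \<times> 'm) qoracle \<Rightarrow> ('a \<times> 'n) qop set \<Rightarrow> bool" where
  "compatible G RA RM RM' \<psi>0 orc Pis \<longleftrightarrow>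
     group G \<and> unitary_rep G RA \<and> unitary_rep G RM \<and> unitary_rep G RM' \<and>
     (\<forall>g\<in>carrier G. qapply (RA g) \<psi>0 = \<psi>0) \<and>
     (\<forall>g\<in>carrier G. conj_by (kron (RA g) (RM g)) (qoracle_op orc)
                        (kron (RA (inv\<^bsub>G\<^esub> g)) (RM (inv\<^bsub>G\<^esub> g))) = qoracle_op orc) \<and>
     (\<forall>g\<in>carrier G. (\<lambda>Pr. conj_by (kron (RA g) (RM' g)) Pr
                        (kron (RA (inv\<^bsub>G\<^esub> g)) (RM' (inv\<^bsub>G\<^esub> g)))) ` Pis = Pis)"

definition invariant_protocol ::
  "('g, 'b) monoid_scheme \<Rightarrow> ('g \<Rightarrow> 'a::finite qop) \<Rightarrow> ('g \<Rightarrow> 'm::finite qop) \<Rightarrow> ('g \<Rightarrow> 'n::finite qop)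
   \<Rightarrow> ('a \<times> 'm) qoracle \<Rightarrow> real \<Rightarrow> (real \<Rightarrow> ('a \<times> 'm) qop) \<Rightarrow> ('a \<times> 'n) qop \<Rightarrow> bool" where
  "invariant_protocol G RA RM RM' orc T \<rho>t \<rho>' \<longleftrightarrow>
     (\<forall>g\<in>carrier G. \<forall>t\<in>query_times orc T.
        conj_by (kron (RA g) (RM g)) (\<rho>t t) (kron (RA (inv\<^bsub>G\<^esub> g)) (RM (inv\<^bsub>G\<^esub> g))) = \<rho>t t) \<and>
     (\<forall>g\<in>carrier G.
        conj_by (kron (RA g) (RM' g)) \<rho>' (kron (RA (inv\<^bsub>G\<^esub> g)) (RM' (inv\<^bsub>G\<^esub> g))) = \<rho>')"

end

theory Submission
  imports Defs
begin

text \<open>Conjugating a protocol by a symmetry \<open>R(h)\<close> yields a protocol with the same success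
  probability, and the conditions for a triple of superoperators on \<open>A\<close>, \<open>A \<otimes> M\<close> and
  \<open>A \<otimes> M'\<close> to map protocols to protocols in this way are closed and convex in the triple.
  Since \<open>G\<close> is an arbitrary group, there is no Haar measure to average over; instead take the
  point of least norm in the closed convex hull of the conjugation triples. Left composition with
  conjugation by \<open>R(g)\<close> is a linear isometry permuting the conjugation triples, so it fixes that
  point. Applying this \<open>G\<close>-fixed triple to any protocol gives a \<open>G\<close>-invariant protocol with the
  same success probability.\<close>

lemma sum_UNIV_prod:
  "(\<Sum>x\<in>(UNIV::('a::finite \<times> 'b::finite) set). f x) = (\<Sum>a\<in>UNIV. \<Sum>b\<in>UNIV. f (a, b))"
  by (simp add: sum.cartesian_product flip: UNIV_Times_UNIV)

lemma sum_swap3: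
  "(\<Sum>a\<in>A. \<Sum>b\<in>B. \<Sum>c\<in>C. f a b c) = (\<Sum>b\<in>B. \<Sum>c\<in>C. \<Sum>a\<in>A. f a b c)"
proof -
  have "(\<Sum>a\<in>A. \<Sum>b\<in>B. \<Sum>c\<in>C. f a b c) = (\<Sum>b\<in>B. \<Sum>a\<in>A. \<Sum>c\<in>C. f a b c)"
    by (rule sum.swap)
  also have "\<dots> = (\<Sum>b\<in>B. \<Sum>c\<in>C. \<Sum>a\<in>A. f a b c)"
    by (rule sum.cong[OF refl], rule sum.swap)
  finally show ?thesis .
qed

lemma sum_swap4:
  "(\<Sum>a\<in>A. \<Sum>b\<in>B. \<Sum>c\<in>C. \<Sum>d\<in>D. f a b c d) = (\<Sum>d\<in>D. \<Sum>c\<in>C. \<Sum>a\<in>A. \<Sum>b\<in>B. f a b c d)"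
proof -
  have "(\<Sum>a\<in>A. \<Sum>b\<in>B. \<Sum>c\<in>C. \<Sum>d\<in>D. f a b c d) = (\<Sum>a\<in>A. \<Sum>c\<in>C. \<Sum>d\<in>D. \<Sum>b\<in>B. f a b c d)"
    by (rule sum.cong[OF refl], rule sum_swap3)
  also have "\<dots> = (\<Sum>c\<in>C. \<Sum>d\<in>D. \<Sum>a\<in>A. \<Sum>b\<in>B. f a b c d)"
    by (rule sum_swap3)
  also have "\<dots> = (\<Sum>d\<in>D. \<Sum>c\<in>C. \<Sum>a\<in>A. \<Sum>b\<in>B. f a b c d)"
    by (rule sum.swap)
  finally show ?thesis .
qed

lemma qmul_assoc: "qmul (qmul A B) C = qmul A (qmul B C)"
  unfolding qmul_def
  by (auto simp: fun_eq_iff sum_distrib_left sum_distrib_right mult.assoc intro: sum.swap)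

lemma qmul_qid_left [simp]: "qmul qid A = A"
  by (simp add: qmul_def qid_def fun_eq_iff mult_if_delta)

lemma qmul_qid_right [simp]: "qmul A qid = A"
  by (simp add: qmul_def qid_def fun_eq_iff if_distrib[of "\<lambda>z. _ * z"] cong: if_cong)

lemma qadj_qmul: "qadj (qmul A B) = qmul (qadj B) (qadj A)"
  by (simp add: qadj_def qmul_def fun_eq_iff mult.commute)

lemma qadj_qadj [simp]: "qadj (qadj A) = A"
  by (simp add: qadj_def)

lemma qtrace_qmul_commute: "qtrace (qmul A B) = qtrace (qmul B A)"
  unfolding qtrace_def qmul_def by (subst sum.swap) (simp add: mult.commute)

lemma qtrace_qmul_conj:
  "qtrace (qmul P (qmul (qmul Q X) (qadj Q))) = qtrace (qmul (qmul (qmul (qadj Q) P) Q) X)"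
  by (metis qtrace_qmul_commute qmul_assoc)

lemma kron_qmul: "qmul (kron A B) (kron C D) = kron (qmul A C) (qmul B D)"
  unfolding qmul_def kron_def
  by (auto simp: fun_eq_iff sum_UNIV_prod sum_product mult_ac)

lemma qadj_kron: "qadj (kron A B) = kron (qadj A) (qadj B)"
  by (auto simp: qadj_def kron_def fun_eq_iff)

lemma kron_qid: "kron qid qid = qid"
  by (auto simp: qid_def kron_def fun_eq_iff)

lemma qunitaryD: "qunitary U \<Longrightarrow> qmul U (qadj U) = qid" "qunitary U \<Longrightarrow> qmul (qadj U) U = qid"
  by (simp_all add: qunitary_def)

lemma qunitary_cancel_left: "qunitary U \<Longrightarrow> qmul (qadj U) (qmul U X) = X"
  by (simp flip: qmul_assoc add: qunitaryD)

lemma qunitary_kron: "qunitary A \<Longrightarrow> qunitary B \<Longrightarrow> qunitary (kron A B)"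
  by (simp add: qunitary_def qadj_kron kron_qmul kron_qid)

lemma qpositive_conj:
  assumes "qpositive X"
  shows "qpositive (qmul (qmul R X) (qadj R))"
proof -
  have "qadj X = X" using assms by (simp add: qpositive_def qhermitian_def)
  then have "qhermitian (qmul (qmul R X) (qadj R))"
    by (simp add: qhermitian_def qadj_qmul qmul_assoc)
  moreover have "0 \<le> Re (\<Sum>i\<in>UNIV. \<Sum>j\<in>UNIV. cnj (v i) * qmul (qmul R X) (qadj R) i j * v j)" for v
  proof -
    define w where "w l = (\<Sum>j\<in>UNIV. cnj (R j l) * v j)" for l
    have "(\<Sum>i\<in>UNIV. \<Sum>j\<in>UNIV. cnj (v i) * qmul (qmul R X) (qadj R) i j * v j)
        = (\<Sum>i\<in>UNIV. \<Sum>j\<in>UNIV. \<Sum>l\<in>UNIV. \<Sum>k\<in>UNIV. cnj (v i) * R i k * X k l * cnj (R j l) * v j)"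
      unfolding qmul_def qadj_def by (simp add: sum_distrib_left sum_distrib_right mult_ac)
    also have "\<dots> = (\<Sum>k\<in>UNIV. \<Sum>l\<in>UNIV. \<Sum>i\<in>UNIV. \<Sum>j\<in>UNIV. cnj (v i) * R i k * X k l * cnj (R j l) * v j)"
      by (rule sum_swap4)
    also have "\<dots> = (\<Sum>k\<in>UNIV. \<Sum>l\<in>UNIV. cnj (w k) * X k l * w l)"
      unfolding w_def by (simp add: sum_distrib_left sum_distrib_right mult_ac sum_product)
    finally show ?thesis using assms by (simp add: qpositive_def)
  qed
  ultimately show ?thesis by (simp add: qpositive_def)
qed

lemma qproj_conj_fixed:
  assumes "qapply R \<psi> = \<psi>"
  shows "qmul (qmul R (qproj \<psi>)) (qadj R) = qproj \<psi>"
proof -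
  have "qmul (qmul R (qproj \<psi>)) (qadj R) i j = qapply R \<psi> i * cnj (qapply R \<psi> j)" for i j
    unfolding qmul_def qproj_def qadj_def qapply_def
    by (simp add: sum_distrib_left sum_distrib_right sum_product mult_ac)
  then show ?thesis by (simp add: assms fun_eq_iff qproj_def)
qed

lemma qmul_commute_of_conj_fixed:
  assumes "qunitary Q" "qmul (qmul Q B) (qadj Q) = B"
  shows "qmul Q B = qmul B Q" "qmul B (qadj Q) = qmul (qadj Q) B"
proof -
  have "qmul B Q = qmul (qmul Q B) (qmul (qadj Q) Q)"
    by (subst (1) assms(2)[symmetric]) (simp add: qmul_assoc)
  then show "qmul Q B = qmul B Q" by (simp add: qunitaryD[OF assms(1)])
  have "qmul (qadj Q) B = qmul (qmul (qadj Q) Q) (qmul B (qadj Q))"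
    by (subst (1) assms(2)[symmetric]) (simp add: qmul_assoc)
  then show "qmul B (qadj Q) = qmul (qadj Q) B" by (simp add: qunitaryD[OF assms(1)])
qed

lemma conj_fixed_qadj:
  assumes "qmul (qmul Q B) (qadj Q) = B"
  shows "qmul (qmul Q (qadj B)) (qadj Q) = qadj B"
proof -
  have "qadj (qmul (qmul Q B) (qadj Q)) = qadj B" using assms by simp
  then show ?thesis by (simp add: qadj_qmul qmul_assoc)
qed

lemma qmul_kron_qid_left: "qmul (kron A qid) Y (i, m) c = (\<Sum>k\<in>UNIV. A i k * Y (k, m) c)"
  unfolding qmul_def kron_def qid_def
  by (simp add: sum_UNIV_prod if_distrib[of "\<lambda>x. _ * x"] if_distrib[of "\<lambda>x. x * _"] cong: if_cong)

lemma qmul_kron_qid_right: "qmul Z (kron C qid) r (j, m) = (\<Sum>l\<in>UNIV. Z r (l, m) * C l j)"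
  unfolding qmul_def kron_def qid_def
  by (simp add: sum_UNIV_prod if_distrib[of "\<lambda>x. _ * x"] if_distrib[of "\<lambda>x. x * _"] cong: if_cong)

lemma qmul_qid_kron_left: "qmul (kron qid B) Y (i, m) c = (\<Sum>p\<in>UNIV. B m p * Y (i, p) c)"
  unfolding qmul_def kron_def qid_def
  by (simp add: sum_UNIV_prod if_distrib[of "\<lambda>x. _ * x"] if_distrib[of "\<lambda>x. x * _"] cong: if_cong)
    (subst sum.swap, simp)

lemma qmul_qid_kron_right: "qmul Z (kron qid D) r (j, m) = (\<Sum>q\<in>UNIV. Z r (j, q) * D q m)"
  unfolding qmul_def kron_def qid_def
  by (simp add: sum_UNIV_prod if_distrib[of "\<lambda>x. _ * x"] if_distrib[of "\<lambda>x. x * _"] cong: if_cong)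
    (subst sum.swap, simp)

lemma ptrace_conj_kron_qid:
  "ptrace (qmul (qmul (kron A qid) Y) (kron C qid)) = qmul (qmul A (ptrace Y)) C"
proof -
  have "ptrace (qmul (qmul (kron A qid) Y) (kron C qid)) i j =
      (\<Sum>m\<in>UNIV. \<Sum>l\<in>UNIV. \<Sum>k\<in>UNIV. A i k * Y (k, m) (l, m) * C l j)" for i j
    by (simp add: ptrace_def qmul_kron_qid_right qmul_kron_qid_left sum_distrib_right)
  also have "\<dots> i j = qmul (qmul A (ptrace Y)) C i j" for i j
    by (subst sum_swap3) (simp add: qmul_def ptrace_def sum_distrib_left sum_distrib_right mult_ac)
  finally show ?thesis by (simp add: fun_eq_iff)
qed

lemma ptrace_conj_qid_kron:
  assumes "qmul D B = qid"
  shows "ptrace (qmul (qmul (kron qid B) Y) (kron qid D)) = ptrace Y"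
proof -
  have DB: "(\<Sum>m\<in>UNIV. D q m * B m p) = (if q = p then 1 else 0)" for q p
    using assms by (simp add: qmul_def qid_def fun_eq_iff)
  have "ptrace (qmul (qmul (kron qid B) Y) (kron qid D)) i j =
      (\<Sum>m\<in>UNIV. \<Sum>q\<in>UNIV. \<Sum>p\<in>UNIV. Y (i, p) (j, q) * (D q m * B m p))" for i j
    by (simp add: ptrace_def qmul_qid_kron_right qmul_qid_kron_left
        sum_distrib_right sum_distrib_left mult_ac)
  also have "\<dots> i j = (\<Sum>q\<in>UNIV. \<Sum>p\<in>UNIV. Y (i, p) (j, q) * (\<Sum>m\<in>UNIV. D q m * B m p))" for i j
    by (subst sum_swap3) (simp add: sum_distrib_left)
  also have "\<dots> i j = ptrace Y i j" for i j
    by (simp add: DB ptrace_def if_distrib cong: if_cong)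
  finally show ?thesis by (simp add: fun_eq_iff)
qed

lemma ptrace_conj_kron:
  assumes "qunitary B"
  shows "ptrace (qmul (qmul (kron A B) X) (qadj (kron A B))) = qmul (qmul A (ptrace X)) (qadj A)"
proof -
  have "kron A B = qmul (kron A qid) (kron qid B)"
    and "qadj (kron A B) = qmul (kron qid (qadj B)) (kron (qadj A) qid)"
    by (simp_all add: kron_qmul qadj_kron)
  then have "qmul (qmul (kron A B) X) (qadj (kron A B)) =
      qmul (qmul (kron A qid) (qmul (qmul (kron qid B) X) (kron qid (qadj B)))) (kron (qadj A) qid)"
    by (simp add: qmul_assoc)
  then show ?thesis
    by (simp add: ptrace_conj_kron_qid ptrace_conj_qid_kron qunitaryD(2)[OF assms])
qed

section \<open>Superoperators\<close>

text \<open>A superoperator on \<open>'i qop\<close> is stored by its coefficients, so that superoperators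
  form a Euclidean space and closures, convex hulls and closest points are available.\<close>

type_synonym 'i sop = "complex ^ ('i \<times> 'i \<times> 'i \<times> 'i)"

definition sop_apply :: "'i::finite sop \<Rightarrow> 'i qop \<Rightarrow> 'i qop" where
  "sop_apply S X = (\<lambda>i j. \<Sum>k\<in>UNIV. \<Sum>l\<in>UNIV. S $ (i, j, k, l) * X k l)"

definition sop_ad :: "'i::finite qop \<Rightarrow> 'i sop" where
  "sop_ad R = (\<chi> x. case x of (i, j, k, l) \<Rightarrow> R i k * cnj (R j l))"

definition sop_ad_comp :: "'i::finite qop \<Rightarrow> 'i sop \<Rightarrow> 'i sop" where
  "sop_ad_comp R S = (\<chi> x. case x of (i, j, k, l) \<Rightarrow>
     \<Sum>p\<in>UNIV. \<Sum>q\<in>UNIV. R i p * S $ (p, q, k, l) * cnj (R j q))"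

lemma sop_ad_nth [simp]: "sop_ad R $ (i, j, k, l) = R i k * cnj (R j l)"
  by (simp add: sop_ad_def)

lemma sop_ad_comp_nth [simp]:
  "sop_ad_comp R S $ (i, j, k, l) = (\<Sum>p\<in>UNIV. \<Sum>q\<in>UNIV. R i p * S $ (p, q, k, l) * cnj (R j q))"
  by (simp add: sop_ad_comp_def)

lemma sop_apply_ad: "sop_apply (sop_ad R) X = qmul (qmul R X) (qadj R)"
  unfolding sop_apply_def qmul_def qadj_def
  by (simp add: fun_eq_iff sum_distrib_right sum_distrib_left)
    (subst (2) sum.swap, simp add: mult_ac)

lemma sop_apply_ad_commute:
  assumes "qunitary Q" "qmul (qmul Q B) (qadj Q) = B"
  shows "sop_apply (sop_ad Q) (qmul B X) = qmul B (sop_apply (sop_ad Q) X)"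
    and "sop_apply (sop_ad Q) (qmul X B) = qmul (sop_apply (sop_ad Q) X) B"
  using qmul_commute_of_conj_fixed[OF assms]
  by (simp_all add: sop_apply_ad qmul_assoc flip: qmul_assoc[of Q B])

lemma sop_apply_ad_comp: "sop_apply (sop_ad_comp R S) X = qmul (qmul R (sop_apply S X)) (qadj R)"
  unfolding sop_apply_def qmul_def qadj_def
  by (simp add: fun_eq_iff sum_distrib_right sum_distrib_left) (subst sum_swap4, simp add: mult_ac)

lemma sop_ad_comp_ad: "sop_ad_comp R (sop_ad Q) = sop_ad (qmul R Q)"
  by (simp add: vec_eq_iff qmul_def sum_distrib_right sum_distrib_left sum_product)
    (subst (2) sum.swap, simp add: mult_ac)

lemma linear_sop_ad_comp: "linear (sop_ad_comp R)"
  by (rule linearI)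
    (auto simp: vec_eq_iff sum.distrib algebra_simps sum_distrib_left,
     auto simp: scaleR_conv_of_real sum_distrib_left mult_ac)

lemma sop_apply_diff: "sop_apply S (\<lambda>x y. A x y - B x y) = (\<lambda>x y. sop_apply S A x y - sop_apply S B x y)"
  by (simp add: sop_apply_def fun_eq_iff algebra_simps sum_subtractf)

lemma sop_apply_cmul: "sop_apply S (\<lambda>x y. c * A x y) = (\<lambda>x y. c * sop_apply S A x y)"
  by (simp add: sop_apply_def fun_eq_iff sum_distrib_left mult_ac)

lemma continuous_on_sop_apply:
  "(\<And>k l. continuous_on D (\<lambda>s. X s k l)) \<Longrightarrow> continuous_on D (\<lambda>s. sop_apply S (X s) i j)"
  unfolding sop_apply_def by (intro continuous_intros)

lemma has_vector_derivative_sop_apply: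
  "(\<And>k l. ((\<lambda>s. X s k l) has_vector_derivative Y k l) F) \<Longrightarrow>
   ((\<lambda>s. sop_apply S (X s) i j) has_vector_derivative sop_apply S Y i j) F"
  unfolding sop_apply_def by (intro has_vector_derivative_sum has_vector_derivative_mult_right)

definition frob_norm_sq :: "'i::finite qop \<Rightarrow> real" where
  "frob_norm_sq Y = (\<Sum>i\<in>UNIV. \<Sum>j\<in>UNIV. (cmod (Y i j))\<^sup>2)"

lemma frob_norm_sq_qtrace: "complex_of_real (frob_norm_sq Y) = qtrace (qmul Y (qadj Y))"
  by (simp add: frob_norm_sq_def qtrace_def qmul_def qadj_def flip: complex_norm_square)

lemma frob_norm_sq_conj_unitary:
  assumes "qunitary R"
  shows "frob_norm_sq (qmul (qmul R Y) (qadj R)) = frob_norm_sq Y"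
proof -
  have "complex_of_real (frob_norm_sq (qmul (qmul R Y) (qadj R))) =
      qtrace (qmul R (qmul (qmul Y (qadj Y)) (qadj R)))"
    by (simp add: frob_norm_sq_qtrace qadj_qmul qmul_assoc qunitary_cancel_left[OF assms])
  also have "\<dots> = qtrace (qmul (qmul Y (qadj Y)) (qmul (qadj R) R))"
    by (subst qtrace_qmul_commute) (simp add: qmul_assoc)
  also have "\<dots> = complex_of_real (frob_norm_sq Y)"
    by (simp add: frob_norm_sq_qtrace qunitaryD[OF assms])
  finally show ?thesis by simp
qed

lemma norm_sop_ad_comp:
  assumes "qunitary R"
  shows "norm (sop_ad_comp R S) = norm S"
proof -
  have slice: "sop_ad_comp R S $ (i, j, k, l) = qmul (qmul R (\<lambda>p q. S $ (p, q, k, l))) (qadj R) i j"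
    for i j k l
    unfolding sop_ad_comp_nth qmul_def qadj_def
    by (subst sum.swap) (simp add: sum_distrib_right sum_distrib_left mult_ac)
  have "(\<Sum>i\<in>UNIV. \<Sum>j\<in>UNIV. (cmod (sop_ad_comp R S $ (i, j, k, l)))\<^sup>2) =
      (\<Sum>i\<in>UNIV. \<Sum>j\<in>UNIV. (cmod (S $ (i, j, k, l)))\<^sup>2)" for k l
    using frob_norm_sq_conj_unitary[OF assms, of "\<lambda>p q. S $ (p, q, k, l)"]
    by (simp only: slice frob_norm_sq_def)
  then show ?thesis
    unfolding norm_vec_def L2_set_def sum_UNIV_prod
    by (subst (1 2) sum_swap4) (simp del: sop_ad_comp_nth)
qed

section \<open>Fixed points of isometries\<close>

lemma closest_point_fixed:
  fixes f :: "'e::euclidean_space \<Rightarrow> 'e"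
  assumes K: "closed K" "convex K" "K \<noteq> {}" and "f ` K \<subseteq> K" and "\<And>x. norm (f x) = norm x"
  shows "f (closest_point K 0) = closest_point K 0"
proof (rule closest_point_unique[OF K(2,1)])
  have "closest_point K 0 \<in> K" by (rule closest_point_in_set[OF K(1,3)])
  then show "f (closest_point K 0) \<in> K" using assms(4) by blast
  show "\<forall>y\<in>K. dist 0 (f (closest_point K 0)) \<le> dist 0 y"
    using closest_point_le[OF K(1), of _ 0] by (simp add: dist_0_norm assms(5))
qed

lemma linear_image_closure_convex_hull:
  fixes f :: "'e::euclidean_space \<Rightarrow> 'e"
  assumes "linear f" "f ` P \<subseteq> P"
  shows "f ` closure (convex hull P) \<subseteq> closure (convex hull P)"
proof (rule image_closure_subset)
  show "continuous_on (closure (convex hull P)) f"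
    using assms(1) by (simp add: linear_continuous_on linear_conv_bounded_linear)
  have "f ` (convex hull P) \<subseteq> convex hull P"
    using assms by (simp add: convex_hull_linear_image hull_mono)
  then show "f ` (convex hull P) \<subseteq> closure (convex hull P)"
    using closure_subset by blast
qed simp

lemma common_fixed_point_linear_isometries:
  fixes L :: "'j \<Rightarrow> 'e::euclidean_space \<Rightarrow> 'e"
  assumes "P \<noteq> {}" and "\<And>j. j \<in> J \<Longrightarrow> linear (L j)"
    and "\<And>j x. j \<in> J \<Longrightarrow> norm (L j x) = norm x" and "\<And>j. j \<in> J \<Longrightarrow> L j ` P \<subseteq> P"
  shows "\<exists>S\<in>closure (convex hull P). \<forall>j\<in>J. L j S = S"
proof
  let ?K = "closure (convex hull P)"
  have K: "closed ?K" "convex ?K" "?K \<noteq> {}"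
    using assms(1) by (auto simp: closure_eq_empty convex_hull_eq_empty)
  show "closest_point ?K 0 \<in> ?K" by (rule closest_point_in_set[OF K(1,3)])
  show "\<forall>j\<in>J. L j (closest_point ?K 0) = closest_point ?K 0"
    using closest_point_fixed[OF K linear_image_closure_convex_hull] assms(2-4) by blast
qed

definition closed_convex :: "'e::euclidean_space set \<Rightarrow> bool" where
  "closed_convex A \<longleftrightarrow> closed A \<and> convex A"

lemma closed_convex_linear_vimage:
  fixes f :: "'e::euclidean_space \<Rightarrow> 'f::euclidean_space"
  assumes "linear f" "closed C" "convex C"
  shows "closed_convex (f -` C)"
  using assms by (simp add: closed_convex_def convex_linear_vimage continuous_closed_vimage
      linear_continuous_at linear_conv_bounded_linear)

lemma closed_convex_linear_eq:
  fixes f g :: "'e::euclidean_space \<Rightarrow> complex"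
  assumes "linear f" "linear g"
  shows "closed_convex {S. f S = g S}"
proof -
  have "{S. f S = g S} = (\<lambda>S. f S - g S) -` {0}" by auto
  then show ?thesis using assms by (simp add: closed_convex_linear_vimage linear_compose_sub)
qed

lemma closed_convex_linear_eq_const:
  fixes f :: "'e::euclidean_space \<Rightarrow> complex"
  assumes "linear f"
  shows "closed_convex {S. f S = c}"
  using closed_convex_linear_vimage[OF assms, of "{c}"] by (simp add: vimage_def)

lemma closed_convex_linear_Re_ge:
  fixes f :: "'e::euclidean_space \<Rightarrow> complex"
  assumes "linear f"
  shows "closed_convex {S. c \<le> Re (f S)}"
  using closed_convex_linear_vimage[OF assms closed_halfspace_Re_ge convex_halfspace_Re_ge, of c]
  by (simp add: vimage_def)

lemma closed_convex_Int: "closed_convex {S. P S} \<Longrightarrow> closed_convex {S. Q S} \<Longrightarrow> closed_convex {S. P S \<and> Q S}"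
  by (simp add: closed_convex_def Collect_conj_eq closed_Int convex_Int)

lemma closed_convex_imp: "closed_convex {S. Q S} \<Longrightarrow> closed_convex {S. c \<longrightarrow> Q S}"
  by (cases c) (simp_all add: closed_convex_def)

lemma closed_convex_all: "(\<And>x. closed_convex {S. P x S}) \<Longrightarrow> closed_convex {S. \<forall>x. P x S}"
  unfolding closed_convex_def Collect_all_eq by (intro conjI closed_INT convex_INT) auto

lemma closed_convex_ball:
  "(\<And>x. x \<in> A \<Longrightarrow> closed_convex {S. P x S}) \<Longrightarrow> closed_convex {S. \<forall>x\<in>A. P x S}"
  unfolding closed_convex_def Collect_ball_eq by (intro conjI closed_INT convex_INT) auto

lemma closed_convex_fun_eq:
  fixes F G :: "'e::euclidean_space \<Rightarrow> 'i \<Rightarrow> 'j \<Rightarrow> complex"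
  assumes "\<And>i j. linear (\<lambda>S. F S i j)" "\<And>i j. linear (\<lambda>S. G S i j)"
  shows "closed_convex {S. F S = G S}"
  unfolding fun_eq_iff by (intro closed_convex_all closed_convex_linear_eq assms)

lemma closed_convex_fun_eq_const:
  fixes F :: "'e::euclidean_space \<Rightarrow> 'i \<Rightarrow> 'j \<Rightarrow> complex"
  assumes "\<And>i j. linear (\<lambda>S. F S i j)"
  shows "closed_convex {S. F S = C}"
  unfolding fun_eq_iff by (intro closed_convex_all closed_convex_linear_eq_const assms)

lemma linear_mult_left_complex: "linear f \<Longrightarrow> linear (\<lambda>S. (c::complex) * f S)"
  by (rule linearI) (auto simp: linear_add linear_scale scaleR_conv_of_real algebra_simps)

lemma linear_mult_right_complex: "linear f \<Longrightarrow> linear (\<lambda>S. f S * (c::complex))"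
  by (rule linearI) (auto simp: linear_add linear_scale scaleR_conv_of_real algebra_simps)

lemma linear_cnj_comp: "linear f \<Longrightarrow> linear (\<lambda>S. cnj (f S :: complex))"
  by (rule linearI) (auto simp: linear_add linear_scale scaleR_conv_of_real)

lemma linear_sum_comp: "(\<And>i. linear (f i)) \<Longrightarrow> linear (\<lambda>S. \<Sum>i\<in>A. f i S)"
  by (rule linear_compose_sum) auto

lemma linear_vec_nth_comp: "linear f \<Longrightarrow> linear (\<lambda>S. f S $ x)"
  by (rule linearI) (auto simp: linear_add linear_scale)

lemma closed_convex_qpositive:
  fixes F :: "'e::euclidean_space \<Rightarrow> 'i::finite qop"
  assumes "\<And>i j. linear (\<lambda>S. F S i j)"
  shows "closed_convex {S. qpositive (F S)}"
  unfolding qpositive_def qhermitian_def qadj_def fun_eq_iff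
  by (intro closed_convex_Int closed_convex_all closed_convex_linear_eq closed_convex_linear_Re_ge
      linear_cnj_comp linear_sum_comp linear_mult_right_complex linear_mult_left_complex assms)

lemma linear_sop_apply_comp: "linear f \<Longrightarrow> linear (\<lambda>S. sop_apply (f S) X i j)"
  unfolding sop_apply_def by (intro linear_sum_comp linear_mult_right_complex linear_vec_nth_comp)

lemma linear_ptrace_comp: "(\<And>i j. linear (\<lambda>S. F S i j)) \<Longrightarrow> linear (\<lambda>S. ptrace (F S) i j)"
  unfolding ptrace_def by (intro linear_sum_comp)

lemma linear_qmul_left_comp: "(\<And>i j. linear (\<lambda>S. F S i j)) \<Longrightarrow> linear (\<lambda>S. qmul B (F S) i j)"
  unfolding qmul_def by (intro linear_sum_comp linear_mult_left_complex)

lemma linear_qmul_right_comp: "(\<And>i j. linear (\<lambda>S. F S i j)) \<Longrightarrow> linear (\<lambda>S. qmul (F S) B i j)"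
  unfolding qmul_def by (intro linear_sum_comp linear_mult_right_complex)

lemma linear_qtrace_comp: "(\<And>i j. linear (\<lambda>S. F S i j)) \<Longrightarrow> linear (\<lambda>S. qtrace (qmul B (F S)))"
  unfolding qtrace_def by (intro linear_sum_comp linear_qmul_left_comp)

section \<open>Protocol maps\<close>

text \<open>Sufficient conditions on superoperators acting on \<open>A\<close>, \<open>A \<otimes> M\<close> and \<open>A \<otimes> M'\<close> to map
  protocols to protocols. They are linear in the superoperators and quantify over all inputs and
  success thresholds, so that they cut out a closed convex set.\<close>

definition protocol_map ::
  "('a::finite \<Rightarrow> complex) \<Rightarrow> ('a \<times> 'm::finite) qoracle \<Rightarrow> ('a \<times> 'n::finite) qop set
   \<Rightarrow> 'a sop \<Rightarrow> ('a \<times> 'm) sop \<Rightarrow> ('a \<times> 'n) sop \<Rightarrow> bool" where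
  "protocol_map \<psi>0 orc Pis SA SM SN \<longleftrightarrow>
     (\<forall>X. qpositive X \<longrightarrow> qpositive (sop_apply SA X)) \<and>
     (\<forall>X. qpositive X \<longrightarrow> qpositive (sop_apply SM X)) \<and>
     (\<forall>X. qpositive X \<longrightarrow> qpositive (sop_apply SN X)) \<and>
     (\<forall>X. ptrace (sop_apply SM X) = sop_apply SA (ptrace X)) \<and>
     (\<forall>X. ptrace (sop_apply SN X) = sop_apply SA (ptrace X)) \<and>
     sop_apply SA (qproj \<psi>0) = qproj \<psi>0 \<and>
     (\<forall>B\<in>{qoracle_op orc, qadj (qoracle_op orc)}. \<forall>X.
        sop_apply SM (qmul B X) = qmul B (sop_apply SM X) \<and>
        sop_apply SM (qmul X B) = qmul (sop_apply SM X) B) \<and>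
     (\<forall>P X. (\<forall>Pr\<in>Pis. P \<le> Re (qtrace (qmul Pr X))) \<longrightarrow>
        (\<forall>Pr\<in>Pis. P \<le> Re (qtrace (qmul Pr (sop_apply SN X)))))"

lemma protocol_map_discrete_step:
  assumes "protocol_map \<psi>0 (Discrete U \<Delta>) Pis SA SM SN"
  shows "sop_apply SA (ptrace (qmul (qmul U X) (qadj U))) = ptrace (qmul (qmul U (sop_apply SM X)) (qadj U))"
proof -
  have "sop_apply SA (ptrace Y) = ptrace (sop_apply SM Y)" for Y
    using assms by (simp add: protocol_map_def)
  also have "ptrace (sop_apply SM (qmul (qmul U X) (qadj U))) = ptrace (qmul (qmul U (sop_apply SM X)) (qadj U))"
    using assms by (simp add: protocol_map_def)
  finally show ?thesis .
qed

lemma protocol_map_commutator: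
  assumes "protocol_map \<psi>0 (Continuous H) Pis SA SM SN"
  shows "sop_apply SA (ptrace (\<lambda>x y. qmul H X x y - qmul X H x y)) =
    ptrace (\<lambda>x y. qmul H (sop_apply SM X) x y - qmul (sop_apply SM X) H x y)"
proof -
  have "sop_apply SA (ptrace Y) = ptrace (sop_apply SM Y)" for Y
    using assms by (simp add: protocol_map_def)
  also have "ptrace (sop_apply SM (\<lambda>x y. qmul H X x y - qmul X H x y)) =
      ptrace (\<lambda>x y. qmul H (sop_apply SM X) x y - qmul (sop_apply SM X) H x y)"
    using assms by (simp add: protocol_map_def sop_apply_diff)
  finally show ?thesis .
qed

lemma protocol_sop_apply:
  assumes pr: "protocol \<psi>0 orc Pis T P \<rho> \<rho>t \<rho>'" and S: "protocol_map \<psi>0 orc Pis SA SM SN"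
  shows "protocol \<psi>0 orc Pis T P (\<lambda>t. sop_apply SA (\<rho> t)) (\<lambda>t. sop_apply SM (\<rho>t t)) (sop_apply SN \<rho>')"
proof (cases orc)
  case (Discrete U \<Delta>)
  then show ?thesis
    using pr S protocol_map_discrete_step[OF S[unfolded Discrete]]
    by (simp add: protocol_def protocol_map_def)
next
  case (Continuous H)
  have "((\<lambda>s. sop_apply SA (\<rho> s) i j) has_vector_derivative
         (- \<i> * ptrace (\<lambda>x y. qmul H (sop_apply SM (\<rho>t t)) x y - qmul (sop_apply SM (\<rho>t t)) H x y) i j))
       (at t within {0..T})" if "t \<in> {0..T}" for t i j
  proof -
    have "((\<lambda>s. sop_apply SA (\<rho> s) i j) has_vector_derivative
         sop_apply SA (\<lambda>k l. - \<i> * ptrace (\<lambda>x y. qmul H (\<rho>t t) x y - qmul (\<rho>t t) H x y) k l) i j)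
       (at t within {0..T})"
      by (rule has_vector_derivative_sop_apply) (use pr Continuous that in \<open>simp add: protocol_def\<close>)
    then show ?thesis
      unfolding sop_apply_cmul protocol_map_commutator[OF S[unfolded Continuous]] .
  qed
  moreover have "continuous_on {0..T} (\<lambda>s. sop_apply SM (\<rho>t s) i j)" for i j
    using pr Continuous by (intro continuous_on_sop_apply) (simp add: protocol_def del: split_paired_All)
  ultimately show ?thesis using pr S Continuous by (simp add: protocol_def protocol_map_def)
qed

lemma closed_convex_protocol_map:
  "closed_convex {S. protocol_map \<psi>0 orc Pis (fst S) (fst (snd S)) (snd (snd S))}"
proof -
  have "linear fst" "linear (\<lambda>S. fst (snd S))" "linear (\<lambda>S. snd (snd S))"
    by (auto intro: linearI)
  then show ?thesis
    unfolding protocol_map_def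
    by (intro closed_convex_Int closed_convex_ball closed_convex_all closed_convex_imp
        closed_convex_qpositive closed_convex_fun_eq_const closed_convex_fun_eq
        closed_convex_linear_Re_ge linear_sop_apply_comp linear_ptrace_comp
        linear_qmul_left_comp linear_qmul_right_comp linear_qtrace_comp)
qed

section \<open>Symmetrization\<close>

lemma unitary_rep_inv:
  assumes "group G" "unitary_rep G R" "g \<in> carrier G"
  shows "R (inv\<^bsub>G\<^esub> g) = qadj (R g)"
proof -
  have "qmul (R g) (R (inv\<^bsub>G\<^esub> g)) = qid"
    using assms by (metis group.inv_closed group.r_inv unitary_rep_def)
  then have "qmul (qmul (qadj (R g)) (R g)) (R (inv\<^bsub>G\<^esub> g)) = qadj (R g)"
    by (simp add: qmul_assoc)
  then show ?thesis using assms(2,3) by (simp add: unitary_rep_def qunitaryD)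
qed

lemma kron_unitary_rep_inv:
  assumes "group G" "unitary_rep G R1" "unitary_rep G R2" "g \<in> carrier G"
  shows "kron (R1 (inv\<^bsub>G\<^esub> g)) (R2 (inv\<^bsub>G\<^esub> g)) = qadj (kron (R1 g) (R2 g))"
  using assms by (simp add: unitary_rep_inv qadj_kron)

lemma compatible_conj:
  assumes comp: "compatible G RA RM RM' \<psi>0 orc Pis" and g: "g \<in> carrier G"
  shows "qmul (qmul (kron (RA g) (RM g)) (qoracle_op orc)) (qadj (kron (RA g) (RM g))) = qoracle_op orc"
    and "Pr \<in> Pis \<Longrightarrow> qmul (qmul (qadj (kron (RA g) (RM' g))) Pr) (kron (RA g) (RM' g)) \<in> Pis"
proof -
  have G: "group G" and reps: "unitary_rep G RA" "unitary_rep G RM" "unitary_rep G RM'"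
    using comp by (auto simp: compatible_def)
  have "conj_by (kron (RA g) (RM g)) (qoracle_op orc)
      (kron (RA (inv\<^bsub>G\<^esub> g)) (RM (inv\<^bsub>G\<^esub> g))) = qoracle_op orc"
    using comp g unfolding compatible_def by blast
  then show "qmul (qmul (kron (RA g) (RM g)) (qoracle_op orc)) (qadj (kron (RA g) (RM g))) = qoracle_op orc"
    by (simp add: conj_by_def kron_unitary_rep_inv[OF G reps(1,2) g])
  have inv_g: "inv\<^bsub>G\<^esub> g \<in> carrier G" "inv\<^bsub>G\<^esub> (inv\<^bsub>G\<^esub> g) = g"
    using G g by (simp_all add: group.inv_closed group.inv_inv)
  have "(\<lambda>Pr. conj_by (kron (RA (inv\<^bsub>G\<^esub> g)) (RM' (inv\<^bsub>G\<^esub> g))) Pr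
      (kron (RA (inv\<^bsub>G\<^esub> (inv\<^bsub>G\<^esub> g))) (RM' (inv\<^bsub>G\<^esub> (inv\<^bsub>G\<^esub> g))))) ` Pis = Pis"
    using comp inv_g(1) unfolding compatible_def by blast
  then have "(\<lambda>Pr. qmul (qmul (qadj (kron (RA g) (RM' g))) Pr) (kron (RA g) (RM' g))) ` Pis = Pis"
    by (simp add: conj_by_def inv_g(2) kron_unitary_rep_inv[OF G reps(1,3) g])
  then show "Pr \<in> Pis \<Longrightarrow> qmul (qmul (qadj (kron (RA g) (RM' g))) Pr) (kron (RA g) (RM' g)) \<in> Pis"
    by blast
qed

lemma protocol_map_symmetry:
  assumes comp: "compatible G RA RM RM' \<psi>0 orc Pis" and h: "h \<in> carrier G"
  shows "protocol_map \<psi>0 orc Pis (sop_ad (RA h)) (sop_ad (kron (RA h) (RM h))) (sop_ad (kron (RA h) (RM' h)))"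
proof -
  have reps: "unitary_rep G RA" "unitary_rep G RM" "unitary_rep G RM'"
    using comp by (auto simp: compatible_def)
  then have unitary: "qunitary (RA h)" "qunitary (RM h)" "qunitary (RM' h)"
    using h by (simp_all add: unitary_rep_def)
  let ?Q = "kron (RA h) (RM h)"
  have "qmul (qmul ?Q B) (qadj ?Q) = B" if "B \<in> {qoracle_op orc, qadj (qoracle_op orc)}" for B
    using that compatible_conj(1)[OF comp h] conj_fixed_qadj by auto
  then have commutes: "\<forall>B\<in>{qoracle_op orc, qadj (qoracle_op orc)}. \<forall>X.
      sop_apply (sop_ad ?Q) (qmul B X) = qmul B (sop_apply (sop_ad ?Q) X) \<and>
      sop_apply (sop_ad ?Q) (qmul X B) = qmul (sop_apply (sop_ad ?Q) X) B"
    using sop_apply_ad_commute qunitary_kron[OF unitary(1,2)] by blast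
  have "qapply (RA h) \<psi>0 = \<psi>0" using comp h by (simp add: compatible_def)
  with unitary commutes show ?thesis
    unfolding protocol_map_def
    by (auto simp: sop_apply_ad qpositive_conj ptrace_conj_kron qproj_conj_fixed qtrace_qmul_conj
        intro: compatible_conj(2)[OF comp h])
qed

lemma invariant_protocol_map_exists:
  assumes comp: "compatible G RA RM RM' \<psi>0 orc Pis"
  obtains SA SM SN where "protocol_map \<psi>0 orc Pis SA SM SN"
    and "\<forall>g\<in>carrier G. sop_ad_comp (kron (RA g) (RM g)) SM = SM"
    and "\<forall>g\<in>carrier G. sop_ad_comp (kron (RA g) (RM' g)) SN = SN"
proof -
  have G: "group G" and reps: "unitary_rep G RA" "unitary_rep G RM" "unitary_rep G RM'"
    using comp by (auto simp: compatible_def)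
  define \<Psi> where "\<Psi> h = (sop_ad (RA h), sop_ad (kron (RA h) (RM h)), sop_ad (kron (RA h) (RM' h)))"
    for h
  define L where "L g S = (sop_ad_comp (RA g) (fst S), sop_ad_comp (kron (RA g) (RM g)) (fst (snd S)),
      sop_ad_comp (kron (RA g) (RM' g)) (snd (snd S)))" for g S
  have "L g (\<Psi> h) = \<Psi> (g \<otimes>\<^bsub>G\<^esub> h)" if "g \<in> carrier G" "h \<in> carrier G" for g h
    using that reps by (simp add: L_def \<Psi>_def sop_ad_comp_ad kron_qmul unitary_rep_def)
  then have "L g ` \<Psi> ` carrier G \<subseteq> \<Psi> ` carrier G" if "g \<in> carrier G" for g
    using that G by (auto simp del: prod.inject intro: monoid.m_closed[OF group.is_monoid])
  moreover have "linear (L g)" for g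
    by (rule linearI) (simp_all add: L_def linear_add[OF linear_sop_ad_comp] linear_scale[OF linear_sop_ad_comp])
  moreover have "norm (L g S) = norm S" if "g \<in> carrier G" for g S
    using that reps by (simp add: L_def norm_prod_def norm_sop_ad_comp qunitary_kron unitary_rep_def)
  moreover have "\<Psi> ` carrier G \<noteq> {}"
    using G by (auto dest: group.is_monoid monoid.one_closed)
  ultimately obtain S where S: "S \<in> closure (convex hull (\<Psi> ` carrier G))" "\<forall>g\<in>carrier G. L g S = S"
    using common_fixed_point_linear_isometries[of "\<Psi> ` carrier G" "carrier G" L] by blast
  have "closure (convex hull (\<Psi> ` carrier G)) \<subseteq>
      {S. protocol_map \<psi>0 orc Pis (fst S) (fst (snd S)) (snd (snd S))}"
    using closed_convex_protocol_map protocol_map_symmetry[OF comp]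
    by (intro closure_minimal hull_minimal) (auto simp: closed_convex_def \<Psi>_def)
  with S(1) have "protocol_map \<psi>0 orc Pis (fst S) (fst (snd S)) (snd (snd S))" by blast
  moreover have "\<forall>g\<in>carrier G. sop_ad_comp (kron (RA g) (RM g)) (fst (snd S)) = fst (snd S)"
    and "\<forall>g\<in>carrier G. sop_ad_comp (kron (RA g) (RM' g)) (snd (snd S)) = snd (snd S)"
    using S(2) by (auto simp: L_def prod_eq_iff)
  ultimately show ?thesis by (rule that)
qed

lemma invariant_protocol_sop_apply:
  assumes "group G" "unitary_rep G RA" "unitary_rep G RM" "unitary_rep G RM'"
    and "\<forall>g\<in>carrier G. sop_ad_comp (kron (RA g) (RM g)) SM = SM"
    and "\<forall>g\<in>carrier G. sop_ad_comp (kron (RA g) (RM' g)) SN = SN"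
  shows "invariant_protocol G RA RM RM' orc T (\<lambda>t. sop_apply SM (\<rho>t t)) (sop_apply SN \<rho>')"
  using assms by (simp add: invariant_protocol_def conj_by_def kron_unitary_rep_inv
      flip: sop_apply_ad_comp)

theorem lemma1:
  fixes G :: "'g monoid"
    and RA :: "'g \<Rightarrow> 'a::finite qop" and RM :: "'g \<Rightarrow> 'm::finite qop"
    and RM' :: "'g \<Rightarrow> 'n::finite qop"
    and \<psi>0 :: "'a \<Rightarrow> complex" and orc :: "('a \<times> 'm) qoracle"
    and Pis :: "('a \<times> 'n) qop set" and T :: real
  assumes "unit_vec \<psi>0"
    and "qoracle_wf orc"
    and "\<forall>Pr\<in>Pis. qpositive Pr"
    and "compatible G RA RM RM' \<psi>0 orc Pis"
  shows "{P. \<exists>\<rho> \<rho>t \<rho>'. protocol \<psi>0 orc Pis T P \<rho> \<rho>t \<rho>'} =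
         {P. \<exists>\<rho> \<rho>t \<rho>'. protocol \<psi>0 orc Pis T P \<rho> \<rho>t \<rho>' \<and>
                         invariant_protocol G RA RM RM' orc T \<rho>t \<rho>'}"
proof -
  obtain SA SM SN where S: "protocol_map \<psi>0 orc Pis SA SM SN"
    and fixed: "\<forall>g\<in>carrier G. sop_ad_comp (kron (RA g) (RM g)) SM = SM"
      "\<forall>g\<in>carrier G. sop_ad_comp (kron (RA g) (RM' g)) SN = SN"
    using invariant_protocol_map_exists[OF assms(4)] by blast
  have "group G" "unitary_rep G RA" "unitary_rep G RM" "unitary_rep G RM'"
    using assms(4) by (auto simp: compatible_def)
  note invariant = invariant_protocol_sop_apply[OF this fixed]
  show ?thesis
    using protocol_sop_apply[OF _ S] invariant by blast
qed

end
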